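(* Consider periods $t=0,1,\dots,T$ with treatment statuses $D_0,D_1,\dots,D_T\in\{0,1\}$, $D_0=0$, observed outcomes $Y_t$ and potential outcomes $Y_t(0,d_1,\dots,d_T)$ for each path $(0,d_1,\dots,d_T)\in\{0\}\times\{0,1\}^T$, such that $$Y_t=\sum_{(d_1,\dots,d_T)\in\{0,1\}^T}Y_t(0,d_1,\dots,d_T)\,\mathbf 1\{D_0=0,D_1=d_1,\dots,D_T=d_T\},$$ and let $\mathcal I_0$ be a set of pre-treatment periods $\iota_0$, in each of which the outcome equals the untreated potential outcome $Y_{\iota_0}(0)$ for all units. Fix two paths $\mathbf d=(0,d_1,\dots,d_T)$ and $\mathbf d'=(0,d'_1,\dots,d'_T)$ and write $\mathbf D=(D_0,\dots,D_T)$. For $t\ge1$ define $$ATT_t=\mathbb E[Y_t(\mathbf d)-Y_t(\mathbf d')\mid \mathbf D=\mathbf d],\qquad \theta^t_{DIM}=\mathbb E[Y_t\mid \mathbf D=\mathbf d]-\mathbb E[Y_t\mid \mathbf D=\mathbf d'],$$ $$SB_t=\mathbb E[Y_t(\mathbf d')\mid \mathbf D=\mathbf d]-\mathbb E[Y_t(\mathbf d')\mid \mathbf D=\mathbf d'],$$ and for $\iota_0\in\mathcal I_0$, $$SB_{\iota_0}=\mathbb E[Y_{\iota_0}(0)\mid \mathbf D=\mathbf d]-\mathbb E[Y_{\iota_0}(0)\mid \mathbf D=\mathbf d'].$$ Assume (extended bias set stability) that for each $t$, $SB_t\in\big[\inf_{\iota_0\in\mathcal I_0}SB_{\iota_0},\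 \sup_{\iota_0\in\mathcal I_0}SB_{\iota_0}\big]$. Then $$ATT_t\in\Big[\theta^t_{DIM}-\sup_{\iota_0\in\mathcal I_0}SB_{\iota_0},\ \theta^t_{DIM}-\inf_{\iota_0\in\mathcal I_0}SB_{\iota_0}\Big]\equiv\Theta_I^t,$$ and these bounds are sharp: $\Theta_I^t$ is the identified set for $ATT_t$, i.e. every value in $\Theta_I^t$ is attained by some joint distribution of latent and observed variables consistent with the observed data distribution and the assumptions.
   Context: All conditional expectations are assumed to exist, and the conditioning events $\{\mathbf D=\mathbf d\}$, $\{\mathbf D=\mathbf d'\}$ have positive probability. $ATT_t$ is the average effect in period $t$, for units following path $\mathbf d$, of following $\mathbf d$ rather than $\mathbf d'$. *)

theory Defs
  imports "HOL-Probability.Probability"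
begin

text \<open>Treatment paths (0,d_1,...,d_T) are encoded as functions nat => bool with
  d 0 = False and d s = False for s > T (canonical representative).
  Periods of outcomes are integers; the post-treatment periods are 1..T.\<close>

definition is_path :: "nat \<Rightarrow> (nat \<Rightarrow> bool) \<Rightarrow> bool" where
  "is_path T d \<longleftrightarrow> d 0 = False \<and> (\<forall>s>T. d s = False)"

definition zero_path :: "nat \<Rightarrow> bool" where
  "zero_path = (\<lambda>_. False)"

definition Dpath :: "nat \<Rightarrow> (nat \<Rightarrow> 'a \<Rightarrow> bool) \<Rightarrow> 'a \<Rightarrow> nat \<Rightarrow> bool" where
  "Dpath T D \<omega> = (\<lambda>s. if s \<le> T then D s \<omega> else False)"

definition path_event :: "'a measure \<Rightarrow> nat \<Rightarrow> (nat \<Rightarrow> 'a \<Rightarrow> bool) \<Rightarrow> (nat \<Rightarrow> bool) \<Rightarrow> 'a set" where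
  "path_event M T D d = {\<omega> \<in> space M. \<forall>s\<le>T. D s \<omega> = d s}"

definition cexp :: "'a measure \<Rightarrow> ('a \<Rightarrow> real) \<Rightarrow> 'a set \<Rightarrow> real" where
  "cexp M X A = (LINT \<omega>:A|M. X \<omega>) / measure M A"

definition ATT :: "'a measure \<Rightarrow> nat \<Rightarrow> (nat \<Rightarrow> 'a \<Rightarrow> bool) \<Rightarrow> (int \<Rightarrow> (nat \<Rightarrow> bool) \<Rightarrow> 'a \<Rightarrow> real)
    \<Rightarrow> (nat \<Rightarrow> bool) \<Rightarrow> (nat \<Rightarrow> bool) \<Rightarrow> int \<Rightarrow> real" where
  "ATT M T D Yp d d' t = cexp M (\<lambda>\<omega>. Yp t d \<omega> - Yp t d' \<omega>) (path_event M T D d)"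

definition theta_DIM :: "'a measure \<Rightarrow> nat \<Rightarrow> (nat \<Rightarrow> 'a \<Rightarrow> bool) \<Rightarrow> (int \<Rightarrow> 'a \<Rightarrow> real)
    \<Rightarrow> (nat \<Rightarrow> bool) \<Rightarrow> (nat \<Rightarrow> bool) \<Rightarrow> int \<Rightarrow> real" where
  "theta_DIM M T D Y d d' t = cexp M (Y t) (path_event M T D d) - cexp M (Y t) (path_event M T D d')"

definition SB_post :: "'a measure \<Rightarrow> nat \<Rightarrow> (nat \<Rightarrow> 'a \<Rightarrow> bool) \<Rightarrow> (int \<Rightarrow> (nat \<Rightarrow> bool) \<Rightarrow> 'a \<Rightarrow> real)
    \<Rightarrow> (nat \<Rightarrow> bool) \<Rightarrow> (nat \<Rightarrow> bool) \<Rightarrow> int \<Rightarrow> real" where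
  "SB_post M T D Yp d d' t = cexp M (Yp t d') (path_event M T D d) - cexp M (Yp t d') (path_event M T D d')"

definition SB_pre :: "'a measure \<Rightarrow> nat \<Rightarrow> (nat \<Rightarrow> 'a \<Rightarrow> bool) \<Rightarrow> (int \<Rightarrow> (nat \<Rightarrow> bool) \<Rightarrow> 'a \<Rightarrow> real)
    \<Rightarrow> (nat \<Rightarrow> bool) \<Rightarrow> (nat \<Rightarrow> bool) \<Rightarrow> int \<Rightarrow> real" where
  "SB_pre M T D Yp d d' i = cexp M (Yp i zero_path) (path_event M T D d) - cexp M (Yp i zero_path) (path_event M T D d')"

definition dgp :: "'a measure \<Rightarrow> nat \<Rightarrow> int set \<Rightarrow> (nat \<Rightarrow> 'a \<Rightarrow> bool) \<Rightarrow> (int \<Rightarrow> 'a \<Rightarrow> real)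
    \<Rightarrow> (int \<Rightarrow> (nat \<Rightarrow> bool) \<Rightarrow> 'a \<Rightarrow> real) \<Rightarrow> (nat \<Rightarrow> bool) \<Rightarrow> (nat \<Rightarrow> bool) \<Rightarrow> bool" where
  "dgp M T I0 D Y Yp d d' \<longleftrightarrow>
     prob_space M \<and>
     (\<forall>s\<le>T. D s \<in> measurable M (count_space UNIV)) \<and>
     (\<forall>t. Y t \<in> borel_measurable M) \<and>
     (\<forall>\<omega>\<in>space M. D 0 \<omega> = False) \<and>
     (\<forall>t. \<forall>\<omega>\<in>space M. Y t \<omega> = Yp t (Dpath T D \<omega>) \<omega>) \<and>
     (\<forall>i\<in>I0. \<forall>\<omega>\<in>space M. Y i \<omega> = Yp i zero_path \<omega>) \<and>
     measure M (path_event M T D d) > 0 \<and> measure M (path_event M T D d') > 0 \<and>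
     (\<forall>t\<in>{1..int T}. integrable M (Y t) \<and> integrable M (Yp t d) \<and> integrable M (Yp t d')) \<and>
     (\<forall>i\<in>I0. integrable M (Y i))"

definition ESB :: "'a measure \<Rightarrow> nat \<Rightarrow> int set \<Rightarrow> (nat \<Rightarrow> 'a \<Rightarrow> bool)
    \<Rightarrow> (int \<Rightarrow> (nat \<Rightarrow> bool) \<Rightarrow> 'a \<Rightarrow> real) \<Rightarrow> (nat \<Rightarrow> bool) \<Rightarrow> (nat \<Rightarrow> bool) \<Rightarrow> bool" where
  "ESB M T I0 D Yp d d' \<longleftrightarrow>
     (\<forall>t\<in>{1..int T}. SB_post M T D Yp d d' t \<in>
        {Inf (SB_pre M T D Yp d d' ` I0) .. Sup (SB_pre M T D Yp d d' ` I0)})"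

definition obs :: "nat \<Rightarrow> int set \<Rightarrow> (nat \<Rightarrow> 'a \<Rightarrow> bool) \<Rightarrow> (int \<Rightarrow> 'a \<Rightarrow> real)
    \<Rightarrow> 'a \<Rightarrow> (nat \<Rightarrow> bool) \<times> (int \<Rightarrow> real)" where
  "obs T I0 D Y \<omega> = (restrict (\<lambda>s. D s \<omega>) {..T}, restrict (\<lambda>t. Y t \<omega>) (I0 \<union> {0..int T}))"

definition obs_space :: "nat \<Rightarrow> int set \<Rightarrow> ((nat \<Rightarrow> bool) \<times> (int \<Rightarrow> real)) measure" where
  "obs_space T I0 = (\<Pi>\<^sub>M s\<in>{..T}. count_space UNIV) \<Otimes>\<^sub>M (\<Pi>\<^sub>M t\<in>I0 \<union> {0..int T}. borel)"

end

theory Submission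
  imports Defs
begin

text \<open>Consistency gives \<open>E[Y\<^sub>t | D = d] = E[Y\<^sub>t(d) | D = d]\<close> and
  \<open>E[Y\<^sub>t | D = d'] = E[Y\<^sub>t(d') | D = d']\<close>, hence \<open>ATT\<^sub>t = \<theta>\<^sub>D\<^sub>I\<^sub>M - SB\<^sub>t\<close>, and bias set
  stability bounds \<open>SB\<^sub>t\<close> by the infimum and supremum of the pre-treatment biases.
  For sharpness note that the observed data involve only \<open>D\<close> and \<open>Y\<close>, while the
  counterfactual \<open>Y\<^sub>t(d')\<close> of the units with \<open>D = d\<close> is never observed. Adding a constant
  \<open>c\<close> to it on \<open>{D = d}\<close> keeps consistency, the observed law and all pre-treatment
  biases, and moves \<open>SB\<^sub>t\<close> by \<open>c\<close> and \<open>ATT\<^sub>t\<close> by \<open>-c\<close>; so every value of the interval is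
  attained by a data generating process that still satisfies bias set stability.\<close>

lemma path_event_in_sets:
  assumes "\<And>s. s \<le> T \<Longrightarrow> D s \<in> measurable M (count_space UNIV)"
  shows "path_event M T D p \<in> sets M"
proof -
  have "{\<omega> \<in> space M. D s \<omega> = p s} \<in> sets M" if "s \<in> {..T}" for s
  proof -
    have "D s -` {p s} \<inter> space M \<in> sets M"
      using assms[of s] that by (intro measurable_sets) auto
    then show ?thesis
      by (simp add: vimage_def Int_def conj_commute)
  qed
  then have "{\<omega> \<in> space M. \<forall>s\<in>{..T}. D s \<omega> = p s} \<in> sets M"
    by (rule sets.sets_Collect_finite_All) (assumption, rule finite_atMost)
  moreover have "path_event M T D p = {\<omega> \<in> space M. \<forall>s\<in>{..T}. D s \<omega> = p s}"
    unfolding path_event_def by auto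
  ultimately show ?thesis
    by simp
qed

lemma Dpath_path_event:
  assumes "is_path T p" and "\<omega> \<in> path_event M T D p"
  shows "Dpath T D \<omega> = p"
  using assms unfolding is_path_def path_event_def Dpath_def by (auto simp: not_le)

lemma path_event_subset_space: "path_event M T D p \<subseteq> space M"
  unfolding path_event_def by auto

lemma integrable_imp_set_integrable:
  fixes f :: "'a \<Rightarrow> real"
  assumes "A \<in> sets M" and "integrable M f"
  shows "set_integrable M A f"
  unfolding set_integrable_def using integrable_mult_indicator[OF assms] .

lemma cexp_cong:
  assumes "A \<in> sets M" and "\<And>\<omega>. \<omega> \<in> A \<Longrightarrow> f \<omega> = g \<omega>"
  shows "cexp M f A = cexp M g A"
proof -
  have "(LINT \<omega>:A|M. f \<omega>) = (LINT \<omega>:A|M. g \<omega>)"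
    by (rule set_lebesgue_integral_cong) (use assms in auto)
  then show ?thesis
    unfolding cexp_def by simp
qed

lemma cexp_diff:
  assumes "set_integrable M A f" and "set_integrable M A g"
  shows "cexp M (\<lambda>\<omega>. f \<omega> - g \<omega>) A = cexp M f A - cexp M g A"
  unfolding cexp_def using set_integral_diff(2)[OF assms] by (simp add: diff_divide_distrib)

lemma (in finite_measure) cexp_const:
  assumes "A \<in> sets M" and "measure M A \<noteq> 0"
  shows "cexp M (\<lambda>_. c) A = c"
proof -
  have "emeasure M A \<noteq> \<infinity>"
    using emeasure_finite by simp
  then have "(LINT _:A|M. c) = measure M A * c"
    using set_integral_const[OF assms(1), of c] by simp
  then show ?thesis
    unfolding cexp_def using assms(2) by simp
qed

lemma dgp_prob_space: "dgp M T I0 D Y Yp d d' \<Longrightarrow> prob_space M"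
  unfolding dgp_def by blast

lemma dgp_path_event_in_sets:
  assumes "dgp M T I0 D Y Yp d d'"
  shows "path_event M T D p \<in> sets M"
proof (rule path_event_in_sets)
  show "D s \<in> measurable M (count_space UNIV)" if "s \<le> T" for s
    using assms that unfolding dgp_def by simp
qed

lemma dgp_observed_outcome:
  assumes "dgp M T I0 D Y Yp d d'" and "\<omega> \<in> space M"
  shows "Y t \<omega> = Yp t (Dpath T D \<omega>) \<omega>"
  using assms unfolding dgp_def by (simp only: Ball_def)

lemma ATT_eq_theta_DIM_minus_SB_post:
  assumes dgp: "dgp M T I0 D Y Yp d d'"
    and "is_path T d" and "is_path T d'" and "t \<in> {1..int T}"
  shows "ATT M T D Yp d d' t = theta_DIM M T D Y d d' t - SB_post M T D Yp d d' t"
proof -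
  have consistent: "Y t \<omega> = Yp t p \<omega>" if "is_path T p" "\<omega> \<in> path_event M T D p" for p \<omega>
    using dgp_observed_outcome[OF dgp] Dpath_path_event[OF that] that(2) path_event_subset_space
    by (metis subsetD)
  let ?A = "path_event M T D d"
  have A: "?A \<in> sets M"
    using dgp by (rule dgp_path_event_in_sets)
  have "integrable M (Yp t d)" and "integrable M (Yp t d')"
    using dgp assms(4) unfolding dgp_def by auto
  then have "ATT M T D Yp d d' t = cexp M (Yp t d) ?A - cexp M (Yp t d') ?A"
    unfolding ATT_def using A by (intro cexp_diff integrable_imp_set_integrable)
  also have "cexp M (Yp t d) ?A = cexp M (Y t) ?A"
    using A consistent[OF assms(2)] by (intro cexp_cong) auto
  also have "cexp M (Y t) (path_event M T D d') = cexp M (Yp t d') (path_event M T D d')"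
    using dgp consistent[OF assms(3)] by (intro cexp_cong dgp_path_event_in_sets)
  then have "cexp M (Y t) ?A - cexp M (Yp t d') ?A
      = theta_DIM M T D Y d d' t - SB_post M T D Yp d d' t"
    unfolding theta_DIM_def SB_post_def by simp
  finally show ?thesis .
qed

definition shift_potential_outcome ::
    "(int \<Rightarrow> (nat \<Rightarrow> bool) \<Rightarrow> 'a \<Rightarrow> real) \<Rightarrow> int \<Rightarrow> (nat \<Rightarrow> bool) \<Rightarrow> 'a set \<Rightarrow> real
      \<Rightarrow> int \<Rightarrow> (nat \<Rightarrow> bool) \<Rightarrow> 'a \<Rightarrow> real" where
  "shift_potential_outcome Yp t p A c = Yp(t := (Yp t)(p := \<lambda>\<omega>. Yp t p \<omega> + c * indicator A \<omega>))"

lemma shift_potential_outcome_apply: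
  "shift_potential_outcome Yp t p A c s q \<omega> =
     (if s = t \<and> q = p then Yp t p \<omega> + c * indicator A \<omega> else Yp s q \<omega>)"
  unfolding shift_potential_outcome_def by simp

lemma dgp_shift_potential_outcome:
  assumes dgp: "dgp M T I0 D Y Yp d d'"
    and "is_path T d" and "d \<noteq> d'" and "t \<notin> I0"
  shows "dgp M T I0 D Y (shift_potential_outcome Yp t d' (path_event M T D d) c) d d'"
proof -
  interpret prob_space M
    using dgp by (rule dgp_prob_space)
  let ?A = "path_event M T D d"
  let ?Yq = "shift_potential_outcome Yp t d' ?A c"
  have A: "?A \<in> sets M"
    using dgp by (rule dgp_path_event_in_sets)
  have consistent: "Y s \<omega> = ?Yq s (Dpath T D \<omega>) \<omega>" if "\<omega> \<in> space M" for s \<omega>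
  proof -
    have "Y s \<omega> = Yp s (Dpath T D \<omega>) \<omega>"
      using dgp that by (rule dgp_observed_outcome)
    moreover have "Dpath T D \<omega> \<noteq> d' \<or> \<omega> \<notin> ?A"
      using Dpath_path_event[OF assms(2), of \<omega> M D] assms(3) by blast
    ultimately show ?thesis
      by (auto simp: shift_potential_outcome_apply)
  qed
  have "emeasure M ?A < \<infinity>"
    using emeasure_finite[of ?A] by (simp add: less_top[symmetric])
  then have "integrable M (indicator ?A :: 'a \<Rightarrow> real)"
    by (rule integrable_real_indicator[OF A])
  then have integrable: "integrable M (?Yq s q)" if "integrable M (Yp s q)" for s q
    using that by (auto simp: shift_potential_outcome_def)
  have untreated: "?Yq i zero_path = Yp i zero_path" if "i \<in> I0" for i
    using that assms(4) by (auto simp: shift_potential_outcome_def)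
  show ?thesis
    unfolding dgp_def
  proof (intro conjI)
    show "\<forall>s. \<forall>\<omega>\<in>space M. Y s \<omega> = ?Yq s (Dpath T D \<omega>) \<omega>"
      using consistent by blast
    have "\<forall>i\<in>I0. \<forall>\<omega>\<in>space M. Y i \<omega> = Yp i zero_path \<omega>"
      using dgp unfolding dgp_def by blast
    then show "\<forall>i\<in>I0. \<forall>\<omega>\<in>space M. Y i \<omega> = ?Yq i zero_path \<omega>"
      using untreated by simp
    have "\<forall>s\<in>{1..int T}. integrable M (Y s) \<and> integrable M (Yp s d) \<and> integrable M (Yp s d')"
      using dgp unfolding dgp_def by blast
    then show "\<forall>s\<in>{1..int T}. integrable M (Y s) \<and> integrable M (?Yq s d) \<and> integrable M (?Yq s d')"
      using integrable by blast
  qed (use dgp in \<open>simp_all add: dgp_def\<close>)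
qed

lemma ATT_shift_potential_outcome:
  assumes dgp: "dgp M T I0 D Y Yp d d'"
    and "d \<noteq> d'" and "t \<in> {1..int T}"
  shows "ATT M T D (shift_potential_outcome Yp t d' (path_event M T D d) c) d d' t
    = ATT M T D Yp d d' t - c"
proof -
  interpret prob_space M
    using dgp by (rule dgp_prob_space)
  let ?A = "path_event M T D d"
  let ?Yq = "shift_potential_outcome Yp t d' ?A c"
  have A: "?A \<in> sets M"
    using dgp by (rule dgp_path_event_in_sets)
  have "ATT M T D ?Yq d d' t = cexp M (\<lambda>\<omega>. (Yp t d \<omega> - Yp t d' \<omega>) - c) ?A"
    unfolding ATT_def using assms(2)
    by (intro cexp_cong[OF A]) (simp add: shift_potential_outcome_apply)
  also have "\<dots> = ATT M T D Yp d d' t - cexp M (\<lambda>_. c) ?A"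
    unfolding ATT_def using A dgp assms(3) unfolding dgp_def
    by (intro cexp_diff integrable_imp_set_integrable) auto
  also have "cexp M (\<lambda>_. c) ?A = c"
    using A dgp unfolding dgp_def by (intro cexp_const) auto
  finally show ?thesis .
qed

lemma SB_pre_shift_potential_outcome:
  "i \<noteq> t \<Longrightarrow> SB_pre M T D (shift_potential_outcome Yp t p A c) d d' i = SB_pre M T D Yp d d' i"
  unfolding SB_pre_def shift_potential_outcome_def by simp

lemma SB_post_shift_potential_outcome:
  "s \<noteq> t \<Longrightarrow> SB_post M T D (shift_potential_outcome Yp t p A c) d d' s = SB_post M T D Yp d d' s"
  unfolding SB_post_def shift_potential_outcome_def by simp

lemma ESB_shift_potential_outcome:
  assumes "ESB M T I0 D Yp d d'" and "t \<notin> I0"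
    and "SB_post M T D (shift_potential_outcome Yp t p A c) d d' t
      \<in> {Inf (SB_pre M T D Yp d d' ` I0) .. Sup (SB_pre M T D Yp d d' ` I0)}"
  shows "ESB M T I0 D (shift_potential_outcome Yp t p A c) d d'"
proof -
  have "SB_pre M T D (shift_potential_outcome Yp t p A c) d d' ` I0 = SB_pre M T D Yp d d' ` I0"
    using assms(2) by (intro image_cong refl SB_pre_shift_potential_outcome) auto
  moreover have "SB_post M T D (shift_potential_outcome Yp t p A c) d d' s
      \<in> {Inf (SB_pre M T D Yp d d' ` I0) .. Sup (SB_pre M T D Yp d d' ` I0)}" if "s \<in> {1..int T}" for s
  proof (cases "s = t")
    case False
    then show ?thesis
      using assms(1) that unfolding ESB_def by (simp add: SB_post_shift_potential_outcome)
  qed (use assms(3) in simp)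
  ultimately show ?thesis
    unfolding ESB_def by simp
qed

lemma ATT_bounds_attained:
  assumes dgp: "dgp M T I0 D Y Yp d d'"
    and "is_path T d" and "is_path T d'" and "d \<noteq> d'"
    and "ESB M T I0 D Yp d d'" and "t \<notin> I0" and "t \<in> {1..int T}"
    and "\<theta> \<in> {theta_DIM M T D Y d d' t - Sup (SB_pre M T D Yp d d' ` I0) ..
               theta_DIM M T D Y d d' t - Inf (SB_pre M T D Yp d d' ` I0)}"
  shows "\<exists>Yp'. dgp M T I0 D Y Yp' d d' \<and> ESB M T I0 D Yp' d d' \<and> ATT M T D Yp' d d' t = \<theta>"
proof (intro exI conjI)
  let ?Yq = "shift_potential_outcome Yp t d' (path_event M T D d) (ATT M T D Yp d d' t - \<theta>)"
  show dgq: "dgp M T I0 D Y ?Yq d d'"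
    using dgp assms(2,4,6) by (rule dgp_shift_potential_outcome)
  show att: "ATT M T D ?Yq d d' t = \<theta>"
    using ATT_shift_potential_outcome[OF dgp assms(4,7)] by simp
  have "SB_post M T D ?Yq d d' t = theta_DIM M T D Y d d' t - \<theta>"
    using ATT_eq_theta_DIM_minus_SB_post[OF dgq assms(2,3,7)] att by simp
  then have "SB_post M T D ?Yq d d' t \<in> {Inf (SB_pre M T D Yp d d' ` I0) .. Sup (SB_pre M T D Yp d d' ` I0)}"
    using assms(8) by simp
  then show "ESB M T I0 D ?Yq d d'"
    by (rule ESB_shift_potential_outcome[OF assms(5,6)])
qed

theorem proposition6:
  fixes M :: "'a measure" and T :: nat and I0 :: "int set"
    and D :: "nat \<Rightarrow> 'a \<Rightarrow> bool" and Y :: "int \<Rightarrow> 'a \<Rightarrow> real"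
    and Yp :: "int \<Rightarrow> (nat \<Rightarrow> bool) \<Rightarrow> 'a \<Rightarrow> real"
    and d d' :: "nat \<Rightarrow> bool" and t :: int
  assumes "dgp M T I0 D Y Yp d d'"
    and "is_path T d" and "is_path T d'"
    and "I0 \<noteq> {}" and "I0 \<subseteq> {..0}"
    and "bdd_above (SB_pre M T D Yp d d' ` I0)" and "bdd_below (SB_pre M T D Yp d d' ` I0)"
    and "ESB M T I0 D Yp d d'"
    and "t \<in> {1..int T}"
  shows "ATT M T D Yp d d' t \<in>
           {theta_DIM M T D Y d d' t - Sup (SB_pre M T D Yp d d' ` I0) ..
            theta_DIM M T D Y d d' t - Inf (SB_pre M T D Yp d d' ` I0)}
       \<and> (\<forall>\<theta> \<in> {theta_DIM M T D Y d d' t - Sup (SB_pre M T D Yp d d' ` I0) ..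
                 theta_DIM M T D Y d d' t - Inf (SB_pre M T D Yp d d' ` I0)}.
            \<exists>(M' :: 'a measure) D' Y' Yp'.
              dgp M' T I0 D' Y' Yp' d d' \<and> ESB M' T I0 D' Yp' d d' \<and>
              distr M' (obs_space T I0) (obs T I0 D' Y') = distr M (obs_space T I0) (obs T I0 D Y) \<and>
              ATT M' T D' Yp' d d' t = \<theta>)"
proof (intro conjI ballI)
  show "ATT M T D Yp d d' t \<in> {theta_DIM M T D Y d d' t - Sup (SB_pre M T D Yp d d' ` I0) ..
                                theta_DIM M T D Y d d' t - Inf (SB_pre M T D Yp d d' ` I0)}"
    using ATT_eq_theta_DIM_minus_SB_post[OF assms(1-3,9)] assms(8,9) unfolding ESB_def by auto
  have "t \<notin> I0"
    using assms(5,9) by auto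
  fix \<theta> assume \<theta>: "\<theta> \<in> {theta_DIM M T D Y d d' t - Sup (SB_pre M T D Yp d d' ` I0) ..
                         theta_DIM M T D Y d d' t - Inf (SB_pre M T D Yp d d' ` I0)}"
  have "\<exists>Yp'. dgp M T I0 D Y Yp' d d' \<and> ESB M T I0 D Yp' d d' \<and> ATT M T D Yp' d d' t = \<theta>"
  proof (cases "d = d'")
    case True
    then have "SB_pre M T D Yp d d' ` I0 = {0}" and "theta_DIM M T D Y d d' t = 0"
        and "ATT M T D Yp d d' t = 0"
      using assms(4) unfolding SB_pre_def theta_DIM_def ATT_def cexp_def by auto
    then show ?thesis
      using assms(1,8) \<theta> by auto
  next
    case False
    then show ?thesis
      using ATT_bounds_attained assms(1-3,8,9) \<open>t \<notin> I0\<close> \<theta> by blast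
  qed
  then obtain Yp' where "dgp M T I0 D Y Yp' d d'" "ESB M T I0 D Yp' d d'" "ATT M T D Yp' d d' t = \<theta>"
    by blast
  then show "\<exists>(M' :: 'a measure) D' Y' Yp'.
      dgp M' T I0 D' Y' Yp' d d' \<and> ESB M' T I0 D' Yp' d d' \<and>
      distr M' (obs_space T I0) (obs T I0 D' Y') = distr M (obs_space T I0) (obs T I0 D Y) \<and>
      ATT M' T D' Yp' d d' t = \<theta>"
    by (intro exI[of _ M] exI[of _ D] exI[of _ Y] exI[of _ Yp']) simp
qed

end
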